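(* Consider the stochastic platoon coordination setting described in the context, where the travel times and start times form a random element $\boldsymbol\tau$ taking values in a countable set of realizations $\tau$ with probabilities $\Pr(\boldsymbol\tau=\tau)$, and vehicle $i$'s utility is $U^i(\boldsymbol w^i,\boldsymbol w^{-i})=\sum_{\tau}\Pr(\boldsymbol\tau=\tau)\,U^i(\boldsymbol w^i,\boldsymbol w^{-i},\tau)$. Then the game $G^s=(\mathcal N,\mathcal W,\{U^i\}_{i\in\mathcal N})$, $\mathcal W=\mathcal W^1\times\dots\times\mathcal W^N$, is an exact potential game with potential function $$\Phi(\boldsymbol w)=\sum_{\tau}\Pr(\boldsymbol\tau=\tau)\,\Phi(\boldsymbol w,\tau),\qquad \Phi(\boldsymbol w,\tau)=\sum_{t\in\mathbb Z_+}\sum_{e\in\mathcal E} r\big(|C(e,t,\boldsymbol w,\tau)|,e\big)-\sum_{i\in\mathcal N}\Lambda_i(\boldsymbol w^i),$$ where $r(n,e)=\sum_{j=1}^nR(j,e)$; that is, $\Phi(\boldsymbol w^{i\prime},\boldsymbol w^{-i})-\Phi(\boldsymbol w^{i\prime\prime},\boldsymbol w^{-i})=U^i(\boldsymbol w^{i\prime},\boldsymbol w^{-i})-U^i(\boldsymbol w^{i\prime\prime},\boldsymbol w^{-i})$ for all $i$, all $\boldsymbol w^{i\prime},\boldsymbol w^{i\prime\prime}\in\mathcal W^i$ and all $\boldsymbol w^{-i}$. Hence $G^s$ admits at least one pure Nash equilibrium.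
   Context: Deterministic ingredients: a directed graph $\mathcal G=(\mathcal V,\mathcal E)$; vehicles $\mathcal N=\{1,\dots,N\}$; vehicle $i$ has a fixed path of edges $e^i_1,\dots,e^i_{|\mathcal P^i|}$ with $e^i_k$ from node $v^i_k$ to $v^i_{k+1}$; a finite action set $\mathcal W^i$ of waiting-time vectors $\boldsymbol w^i=(w^i_1,\dots,w^i_{|\mathcal P^i|})\in\mathbb Z_+^{|\mathcal P^i|}$ ($w^i_k$ = waiting time at $v^i_k$); a reward function $R:\mathbb Z_{\ge1}\times\mathcal E\to\mathbb R$; waiting costs $\Lambda_i:\mathcal W^i\to\mathbb R$. A realization $\tau$ consists of travel times $\tau(e,t)\in\mathbb Z_+$ for every $e\in\mathcal E$, $t\in\mathbb Z_+$ (travel time on $e$ when entered at time $t$) and start times $\tau_0^i\in\mathbb Z_+$ (arrival time at $v^i_1$). Given $\tau$ and $\boldsymbol w$, departure times are $t^i_1=\tau^i_0+w^i_1$, $t^i_{k+1}=w^i_{k+1}+t^i_k+\tau(e^i_k,t^i_k)$; $C(e,t,\boldsymbol w,\tau)=\{i:\exists k,\ e^i_k=e,\ t^i_k=t\}$; and $$U^i(\boldsymbol w^i,\boldsymbol w^{-i},\tau)=\sum_{k=1}^{|\mathcal P^i|}R\big(|C(e^i_k,t^i_k,\boldsymbol w,\tau)|,e^i_k\big)-\Lambda_i(\boldsymbol w^i).$$ A game is an exact potential game if a function $\Phi$ on action profiles exists such that any unilateral change of one player's action changes $\Phi$ by exactly the change in that player's utility. A pure Nash equilibrium is a profile from which no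 player can increase its own utility by a unilateral change of action. *)

theory Defs
  imports "HOL-Probability.Probability"
begin

text \<open>A realization
  consists of travel times tt e t (travel time on edge e when entered at time t)
  and start times s0 i (arrival time of vehicle i at its first node).
  Paths and waiting vectors are 0-indexed lists: position k here is k+1 in the paper.\<close>

type_synonym ('v) realization = "(('v \<times> 'v) \<Rightarrow> nat \<Rightarrow> nat) \<times> (nat \<Rightarrow> nat)"

fun dep :: "(('v \<times> 'v) \<Rightarrow> nat \<Rightarrow> nat) \<Rightarrow> nat \<Rightarrow> ('v \<times> 'v) list \<Rightarrow> nat list \<Rightarrow> nat \<Rightarrow> nat" where
  "dep tt s p wv 0 = s + wv ! 0"
| "dep tt s p wv (Suc k) = wv ! Suc k + dep tt s p wv k + tt (p ! k) (dep tt s p wv k)"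

definition coal :: "nat \<Rightarrow> (nat \<Rightarrow> ('v \<times> 'v) list) \<Rightarrow> ('v \<times> 'v) \<Rightarrow> nat \<Rightarrow> (nat \<Rightarrow> nat list) \<Rightarrow> 'v realization \<Rightarrow> nat set" where
  "coal N P e t w \<tau> = {i \<in> {1..N}. \<exists>k < length (P i). P i ! k = e \<and> dep (fst \<tau>) (snd \<tau> i) (P i) (w i) k = t}"

definition util :: "nat \<Rightarrow> (nat \<Rightarrow> ('v \<times> 'v) list) \<Rightarrow> (nat \<Rightarrow> ('v \<times> 'v) \<Rightarrow> real) \<Rightarrow> (nat \<Rightarrow> nat list \<Rightarrow> real)
     \<Rightarrow> nat \<Rightarrow> (nat \<Rightarrow> nat list) \<Rightarrow> 'v realization \<Rightarrow> real" where
  "util N P R \<Lambda> i w \<tau> =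
     (\<Sum>k<length (P i). R (card (coal N P (P i ! k) (dep (fst \<tau>) (snd \<tau> i) (P i) (w i) k) w \<tau>)) (P i ! k))
     - \<Lambda> i (w i)"

definition exp_util :: "'v realization pmf \<Rightarrow> nat \<Rightarrow> (nat \<Rightarrow> ('v \<times> 'v) list) \<Rightarrow> (nat \<Rightarrow> ('v \<times> 'v) \<Rightarrow> real)
     \<Rightarrow> (nat \<Rightarrow> nat list \<Rightarrow> real) \<Rightarrow> nat \<Rightarrow> (nat \<Rightarrow> nat list) \<Rightarrow> real" where
  "exp_util p N P R \<Lambda> i w = measure_pmf.expectation p (\<lambda>\<tau>. util N P R \<Lambda> i w \<tau>)"

definition rcum :: "(nat \<Rightarrow> ('v \<times> 'v) \<Rightarrow> real) \<Rightarrow> nat \<Rightarrow> ('v \<times> 'v) \<Rightarrow> real" where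
  "rcum R n e = (\<Sum>j=1..n. R j e)"

definition pot :: "('v \<times> 'v) set \<Rightarrow> nat \<Rightarrow> (nat \<Rightarrow> ('v \<times> 'v) list) \<Rightarrow> (nat \<Rightarrow> ('v \<times> 'v) \<Rightarrow> real)
     \<Rightarrow> (nat \<Rightarrow> nat list \<Rightarrow> real) \<Rightarrow> (nat \<Rightarrow> nat list) \<Rightarrow> 'v realization \<Rightarrow> real" where
  "pot E N P R \<Lambda> w \<tau> =
     (\<Sum>\<^sub>\<infinity>t::nat. \<Sum>e\<in>E. rcum R (card (coal N P e t w \<tau>)) e) - (\<Sum>i=1..N. \<Lambda> i (w i))"

definition exp_pot :: "'v realization pmf \<Rightarrow> ('v \<times> 'v) set \<Rightarrow> nat \<Rightarrow> (nat \<Rightarrow> ('v \<times> 'v) list)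
     \<Rightarrow> (nat \<Rightarrow> ('v \<times> 'v) \<Rightarrow> real) \<Rightarrow> (nat \<Rightarrow> nat list \<Rightarrow> real) \<Rightarrow> (nat \<Rightarrow> nat list) \<Rightarrow> real" where
  "exp_pot p E N P R \<Lambda> w = measure_pmf.expectation p (\<lambda>\<tau>. pot E N P R \<Lambda> w \<tau>)"

definition profile :: "'i set \<Rightarrow> ('i \<Rightarrow> 'a set) \<Rightarrow> ('i \<Rightarrow> 'a) \<Rightarrow> bool" where
  "profile I A w \<longleftrightarrow> (\<forall>j\<in>I. w j \<in> A j)"

definition exact_potential :: "'i set \<Rightarrow> ('i \<Rightarrow> 'a set) \<Rightarrow> ('i \<Rightarrow> ('i \<Rightarrow> 'a) \<Rightarrow> real) \<Rightarrow> (('i \<Rightarrow> 'a) \<Rightarrow> real) \<Rightarrow> bool" where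
  "exact_potential I A u \<Phi> \<longleftrightarrow>
     (\<forall>i\<in>I. \<forall>w. profile I A w \<longrightarrow> (\<forall>a\<in>A i. \<forall>b\<in>A i.
        \<Phi> (w(i := a)) - \<Phi> (w(i := b)) = u i (w(i := a)) - u i (w(i := b))))"

definition pure_nash :: "'i set \<Rightarrow> ('i \<Rightarrow> 'a set) \<Rightarrow> ('i \<Rightarrow> ('i \<Rightarrow> 'a) \<Rightarrow> real) \<Rightarrow> ('i \<Rightarrow> 'a) \<Rightarrow> bool" where
  "pure_nash I A u w \<longleftrightarrow> profile I A w \<and> (\<forall>i\<in>I. \<forall>a\<in>A i. u i (w(i := a)) \<le> u i w)"

end

theory Submission
  imports Defs
begin

text \<open>Rosenthal's argument, applied realization by realization: view each pair r = (e, t) of an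
  edge and an entry time as a resource and sum R(1, e) + ... + R(load r, e) over all resources.
  Removing vehicle i lowers the load of each of its own resources by one, so this sum splits into
  vehicle i's reward sum plus a term that does not depend on its waiting vector. Utilities and
  potential are bounded uniformly in the realization, so the identity survives taking expectations,
  and a maximiser of the expected potential over the finitely many action profiles is a pure Nash
  equilibrium.\<close>

definition load :: "'i set \<Rightarrow> ('i \<Rightarrow> 'r set) \<Rightarrow> 'r \<Rightarrow> nat" where
  "load I S r = card {j\<in>I. r \<in> S j}"

definition rosenthal_potential :: "'i set \<Rightarrow> ('i \<Rightarrow> 'r set) \<Rightarrow> (nat \<Rightarrow> 'r \<Rightarrow> real) \<Rightarrow> real" where
  "rosenthal_potential I S f = (\<Sum>r\<in>(\<Union>j\<in>I. S j). \<Sum>m=1..load I S r. f m r)"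

lemma load_remove:
  assumes "finite I" "i \<in> I"
  shows "load I S r = load (I - {i}) S r + (if r \<in> S i then 1 else 0)"
proof -
  have "{j\<in>I. r \<in> S j} = (if r \<in> S i then insert i {j\<in>I - {i}. r \<in> S j} else {j\<in>I - {i}. r \<in> S j})"
    using assms(2) by auto
  then show ?thesis
    using assms(1) unfolding load_def by simp
qed

lemma rosenthal_potential_remove:
  assumes "finite I" "i \<in> I" "\<And>j. j \<in> I \<Longrightarrow> finite (S j)"
  shows "rosenthal_potential I S f
       = rosenthal_potential (I - {i}) S f + (\<Sum>r\<in>S i. f (load I S r) r)"
proof -
  let ?U = "\<Union>j\<in>I. S j" and ?U' = "\<Union>j\<in>I - {i}. S j"
  have fin: "finite ?U" using assms by blast
  have U: "?U = ?U' \<union> S i" using assms(2) by blast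
  have "rosenthal_potential I S f
      = (\<Sum>r\<in>?U. (\<Sum>m=1..load (I - {i}) S r. f m r) + (if r \<in> S i then f (load I S r) r else 0))"
    unfolding rosenthal_potential_def
    by (intro sum.cong refl) (simp add: load_remove[OF assms(1,2), of S])
  also have "\<dots> = (\<Sum>r\<in>?U. \<Sum>m=1..load (I - {i}) S r. f m r) + (\<Sum>r\<in>S i. f (load I S r) r)"
    using fin U by (simp add: sum.distrib sum.inter_restrict[symmetric] Int_absorb1)
  also have "(\<Sum>r\<in>?U. \<Sum>m=1..load (I - {i}) S r. f m r) = rosenthal_potential (I - {i}) S f"
    unfolding rosenthal_potential_def
  proof (rule sum.mono_neutral_right)
    have "load (I - {i}) S r = 0" if "r \<notin> ?U'" for r
      using that unfolding load_def by (auto simp: card_eq_0_iff)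
    then show "\<forall>r\<in>?U - ?U'. (\<Sum>m=1..load (I - {i}) S r. f m r) = 0"
      by simp
  qed (use fin U in auto)
  finally show ?thesis .
qed

lemma rosenthal_potential_cong:
  assumes "\<And>j. j \<in> I \<Longrightarrow> S j = S' j"
  shows "rosenthal_potential I S f = rosenthal_potential I S' f"
proof -
  from assms have "(\<Union>j\<in>I. S j) = (\<Union>j\<in>I. S' j)" "load I S = load I S'"
    unfolding load_def by (auto intro!: ext arg_cong[where f = card])
  then show ?thesis unfolding rosenthal_potential_def by simp
qed

lemma abs_rosenthal_potential_le:
  fixes B :: real
  assumes "finite I" "\<And>j. j \<in> I \<Longrightarrow> finite (S j)"
    and "\<And>j r n. j \<in> I \<Longrightarrow> r \<in> S j \<Longrightarrow> n \<le> card I \<Longrightarrow> \<bar>\<Sum>m=1..n. f m r\<bar> \<le> B"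
  shows "\<bar>rosenthal_potential I S f\<bar> \<le> real (\<Sum>j\<in>I. card (S j)) * B"
proof (cases "\<Union>(S ` I) = {}")
  case True
  then show ?thesis
    unfolding rosenthal_potential_def by simp
next
  case False
  then have "0 \<le> B"
    using assms(3)[of _ _ 0] by fastforce
  have load_le: "load I S r \<le> card I" for r
    unfolding load_def using assms(1) by (intro card_mono) auto
  have "\<bar>rosenthal_potential I S f\<bar> \<le> (\<Sum>r\<in>(\<Union>j\<in>I. S j). \<bar>\<Sum>m=1..load I S r. f m r\<bar>)"
    unfolding rosenthal_potential_def by (rule sum_abs)
  also have "\<dots> \<le> real (card (\<Union>j\<in>I. S j)) * B"
    using assms(3) load_le by (intro sum_bounded_above) blast
  also have "\<dots> \<le> real (\<Sum>j\<in>I. card (S j)) * B"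
    using \<open>0 \<le> B\<close> card_UN_le[OF assms(1), of S] by (intro mult_right_mono) (simp_all flip: of_nat_sum)
  finally show ?thesis .
qed

lemma infsum_sum_eq_sum_support:
  fixes g :: "'e \<Rightarrow> 't \<Rightarrow> real"
  assumes "finite E" "finite U" "U \<subseteq> E \<times> UNIV"
    and "\<And>e t. e \<in> E \<Longrightarrow> (e, t) \<notin> U \<Longrightarrow> g e t = 0"
  shows "(\<Sum>\<^sub>\<infinity>t. \<Sum>e\<in>E. g e t) = (\<Sum>(e, t)\<in>U. g e t)"
proof -
  let ?T = "snd ` U"
  have "(\<Sum>\<^sub>\<infinity>t. \<Sum>e\<in>E. g e t) = (\<Sum>\<^sub>\<infinity>t\<in>?T. \<Sum>e\<in>E. g e t)"
  proof (rule infsum_cong_neutral)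
    show "(\<Sum>e\<in>E. g e t) = 0" if "t \<in> UNIV - ?T" for t
      using that assms(4) by (intro sum.neutral) force
  qed simp_all
  also have "\<dots> = (\<Sum>t\<in>?T. \<Sum>e\<in>E. g e t)"
    using assms(2) by simp
  also have "\<dots> = (\<Sum>(e, t)\<in>E \<times> ?T. g e t)"
    unfolding sum.cartesian_product[symmetric] by (rule sum.swap)
  also have "\<dots> = (\<Sum>(e, t)\<in>U. g e t)"
    using assms by (intro sum.mono_neutral_right) (force simp: finite_cartesian_product)+
  finally show ?thesis .
qed

lemma abs_sum_le_double_sum_abs:
  fixes R :: "'m \<Rightarrow> 'e \<Rightarrow> real"
  assumes "finite E" "e \<in> E" "finite M'" "M \<subseteq> M'"
  shows "\<bar>\<Sum>m\<in>M. R m e\<bar> \<le> (\<Sum>e'\<in>E. \<Sum>m\<in>M'. \<bar>R m e'\<bar>)"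
proof -
  have "\<bar>\<Sum>m\<in>M. R m e\<bar> \<le> (\<Sum>m\<in>M. \<bar>R m e\<bar>)"
    by (rule sum_abs)
  also have "\<dots> \<le> (\<Sum>m\<in>M'. \<bar>R m e\<bar>)"
    using assms(3,4) by (intro sum_mono2) auto
  also have "\<dots> \<le> (\<Sum>e'\<in>E. \<Sum>m\<in>M'. \<bar>R m e'\<bar>)"
    using assms(1,2) by (intro member_le_sum[where f = "\<lambda>e'. \<Sum>m\<in>M'. \<bar>R m e'\<bar>"] sum_nonneg) auto
  finally show ?thesis .
qed

lemma integrable_measure_pmf_bounded:
  fixes f :: "'a \<Rightarrow> real"
  assumes "\<And>x. \<bar>f x\<bar> \<le> B"
  shows "integrable (measure_pmf p) f"
  using assms by (intro measure_pmf.integrable_const_bound[where B = B]) auto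

definition edge_entries :: "(nat \<Rightarrow> ('v \<times> 'v) list) \<Rightarrow> (nat \<Rightarrow> nat list) \<Rightarrow> 'v realization \<Rightarrow> nat
    \<Rightarrow> (('v \<times> 'v) \<times> nat) set" where
  "edge_entries P w \<tau> j = (\<lambda>k. (P j ! k, dep (fst \<tau>) (snd \<tau> j) (P j) (w j) k)) ` {..<length (P j)}"

lemma finite_edge_entries [simp]: "finite (edge_entries P w \<tau> j)"
  unfolding edge_entries_def by simp

lemma card_edge_entries_le: "card (edge_entries P w \<tau> j) \<le> length (P j)"
  unfolding edge_entries_def using card_image_le[of "{..<length (P j)}"] by simp

lemma fst_edge_entry_in_path: "r \<in> edge_entries P w \<tau> j \<Longrightarrow> fst r \<in> set (P j)"
  unfolding edge_entries_def by auto

lemma edge_entries_fun_upd_other: "j \<noteq> i \<Longrightarrow> edge_entries P (w(i := a)) \<tau> j = edge_entries P w \<tau> j"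
  unfolding edge_entries_def by simp

lemma card_coal_eq_load: "card (coal N P e t w \<tau>) = load {1..N} (edge_entries P w \<tau>) (e, t)"
  unfolding coal_def load_def edge_entries_def by (rule arg_cong[where f = card]) auto

lemma util_eq_sum_edge_entries:
  assumes "distinct (P i)"
  shows "util N P R \<Lambda> i w \<tau>
       = (\<Sum>r\<in>edge_entries P w \<tau> i. R (load {1..N} (edge_entries P w \<tau>) r) (fst r)) - \<Lambda> i (w i)"
proof -
  have "inj_on (\<lambda>k. (P i ! k, dep (fst \<tau>) (snd \<tau> i) (P i) (w i) k)) {..<length (P i)}"
    using assms by (auto simp: inj_on_def nth_eq_iff_index_eq)
  then show ?thesis
    unfolding util_def card_coal_eq_load edge_entries_def[of P w \<tau> i] by (simp add: sum.reindex)
qed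

lemma pot_eq_rosenthal_potential:
  assumes "finite E" "\<And>j. j \<in> {1..N} \<Longrightarrow> set (P j) \<subseteq> E"
  shows "pot E N P R \<Lambda> w \<tau>
       = rosenthal_potential {1..N} (edge_entries P w \<tau>) (\<lambda>m r. R m (fst r)) - (\<Sum>j=1..N. \<Lambda> j (w j))"
proof -
  let ?S = "edge_entries P w \<tau>"
  let ?U = "\<Union>j\<in>{1..N}. ?S j"
  have "?U \<subseteq> E \<times> UNIV"
  proof
    fix r assume "r \<in> ?U"
    then obtain j where "j \<in> {1..N}" "r \<in> ?S j"
      by blast
    then have "fst r \<in> E"
      using fst_edge_entry_in_path assms(2) by blast
    then show "r \<in> E \<times> UNIV"
      by (cases r) simp
  qed
  moreover have "load {1..N} ?S (e, t) = 0" if "(e, t) \<notin> ?U" for e t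
    using that unfolding load_def by auto
  ultimately have "(\<Sum>\<^sub>\<infinity>t. \<Sum>e\<in>E. rcum R (card (coal N P e t w \<tau>)) e)
      = (\<Sum>(e, t)\<in>?U. rcum R (load {1..N} ?S (e, t)) e)"
    unfolding card_coal_eq_load using assms(1) by (intro infsum_sum_eq_sum_support) (auto simp: rcum_def)
  then show ?thesis
    unfolding pot_def rosenthal_potential_def rcum_def by (simp add: case_prod_beta)
qed

lemma pot_fun_upd_diff:
  assumes "finite E" "\<And>j. j \<in> {1..N} \<Longrightarrow> set (P j) \<subseteq> E"
    and i: "i \<in> {1..N}" "distinct (P i)"
  shows "pot E N P R \<Lambda> (w(i := a)) \<tau> - pot E N P R \<Lambda> (w(i := b)) \<tau>
       = util N P R \<Lambda> i (w(i := a)) \<tau> - util N P R \<Lambda> i (w(i := b)) \<tau>"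
proof -
  let ?f = "\<lambda>m r. R m (fst r)"
  define Q where "Q w' = rosenthal_potential ({1..N} - {i}) (edge_entries P w' \<tau>) ?f
    - (\<Sum>j\<in>{1..N} - {i}. \<Lambda> j (w' j))" for w'
  have split: "pot E N P R \<Lambda> w' \<tau> = Q w' + util N P R \<Lambda> i w' \<tau>" for w'
    using pot_eq_rosenthal_potential[OF assms(1,2), where R = R and \<Lambda> = \<Lambda> and w = w' and \<tau> = \<tau>]
      rosenthal_potential_remove[of "{1..N}" i "edge_entries P w' \<tau>" ?f]
      sum.remove[of "{1..N}" i "\<lambda>j. \<Lambda> j (w' j)"]
      util_eq_sum_edge_entries[where P = P and i = i, OF i(2), where N = N and R = R and \<Lambda> = \<Lambda> and w = w' and \<tau> = \<tau>] i(1)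
    unfolding Q_def by simp
  have "Q (w(i := a)) = Q (w(i := b))"
    unfolding Q_def
    by (intro arg_cong2[where f = minus] rosenthal_potential_cong sum.cong)
      (auto simp: edge_entries_fun_upd_other)
  then show ?thesis
    by (simp add: split)
qed

lemma integrable_util:
  assumes "finite E" "\<And>j. j \<in> {1..N} \<Longrightarrow> set (P j) \<subseteq> E" "i \<in> {1..N}"
  shows "integrable (measure_pmf p) (util N P R \<Lambda> i w)"
proof (rule integrable_measure_pmf_bounded)
  let ?B = "\<Sum>e\<in>E. \<Sum>m\<in>{..N}. \<bar>R m e\<bar>"
  fix \<tau>
  have "\<bar>R (card (coal N P (P i ! k) t w \<tau>)) (P i ! k)\<bar> \<le> ?B" if "k < length (P i)" for k t
  proof -
    have "card (coal N P (P i ! k) t w \<tau>) \<le> card {1..N}"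
      unfolding coal_def by (intro card_mono) auto
    moreover have "P i ! k \<in> E"
      using assms(2,3) that nth_mem by blast
    ultimately show ?thesis
      using abs_sum_le_double_sum_abs[OF assms(1), of "P i ! k" "{..N}" "{card (coal N P (P i ! k) t w \<tau>)}" R]
      by simp
  qed
  then have "\<bar>\<Sum>k<length (P i). R (card (coal N P (P i ! k) (dep (fst \<tau>) (snd \<tau> i) (P i) (w i) k) w \<tau>)) (P i ! k)\<bar>
      \<le> real (card {..<length (P i)}) * ?B"
    by (intro order.trans[OF sum_abs] sum_bounded_above) simp
  then show "\<bar>util N P R \<Lambda> i w \<tau>\<bar> \<le> real (length (P i)) * ?B + \<bar>\<Lambda> i (w i)\<bar>"
    unfolding util_def card_lessThan by (meson abs_triangle_ineq4 add_right_mono order_trans)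
qed

lemma integrable_pot:
  assumes "finite E" "\<And>j. j \<in> {1..N} \<Longrightarrow> set (P j) \<subseteq> E"
  shows "integrable (measure_pmf p) (pot E N P R \<Lambda> w)"
proof (rule integrable_measure_pmf_bounded)
  let ?B = "\<Sum>e\<in>E. \<Sum>m\<in>{..N}. \<bar>R m e\<bar>"
  fix \<tau>
  have "\<bar>rosenthal_potential {1..N} (edge_entries P w \<tau>) (\<lambda>m r. R m (fst r))\<bar>
      \<le> real (\<Sum>j=1..N. card (edge_entries P w \<tau> j)) * ?B"
  proof (rule abs_rosenthal_potential_le)
    fix j r n assume j: "j \<in> {1..N}" and r: "r \<in> edge_entries P w \<tau> j" and "n \<le> card {1..N}"
    moreover have "fst r \<in> E"
      using fst_edge_entry_in_path[OF r] assms(2)[OF j] by blast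
    ultimately show "\<bar>\<Sum>m=1..n. R m (fst r)\<bar> \<le> ?B"
      by (intro abs_sum_le_double_sum_abs[OF assms(1)]) auto
  qed simp_all
  also have "\<dots> \<le> real (\<Sum>j=1..N. length (P j)) * ?B"
    by (intro mult_right_mono of_nat_mono sum_mono card_edge_entries_le) (simp add: sum_nonneg)
  finally have rosenthal_bound: "\<bar>rosenthal_potential {1..N} (edge_entries P w \<tau>) (\<lambda>m r. R m (fst r))\<bar>
      \<le> real (\<Sum>j=1..N. length (P j)) * ?B" .
  have "\<bar>pot E N P R \<Lambda> w \<tau>\<bar>
      \<le> \<bar>rosenthal_potential {1..N} (edge_entries P w \<tau>) (\<lambda>m r. R m (fst r))\<bar> + \<bar>\<Sum>j=1..N. \<Lambda> j (w j)\<bar>"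
    by (simp only: pot_eq_rosenthal_potential[OF assms] abs_triangle_ineq4)
  with rosenthal_bound sum_abs[of "\<lambda>j. \<Lambda> j (w j)" "{1..N}"]
  show "\<bar>pot E N P R \<Lambda> w \<tau>\<bar> \<le> real (\<Sum>j=1..N. length (P j)) * ?B + (\<Sum>j=1..N. \<bar>\<Lambda> j (w j)\<bar>)"
    by linarith
qed

lemma exp_pot_fun_upd_diff:
  assumes "finite E" "\<And>j. j \<in> {1..N} \<Longrightarrow> set (P j) \<subseteq> E"
    and "i \<in> {1..N}" "distinct (P i)"
  shows "exp_pot p E N P R \<Lambda> (w(i := a)) - exp_pot p E N P R \<Lambda> (w(i := b))
       = exp_util p N P R \<Lambda> i (w(i := a)) - exp_util p N P R \<Lambda> i (w(i := b))"
proof -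
  have "exp_pot p E N P R \<Lambda> (w(i := a)) - exp_pot p E N P R \<Lambda> (w(i := b))
      = measure_pmf.expectation p (\<lambda>\<tau>. pot E N P R \<Lambda> (w(i := a)) \<tau> - pot E N P R \<Lambda> (w(i := b)) \<tau>)"
    unfolding exp_pot_def by (intro Bochner_Integration.integral_diff[symmetric] integrable_pot[OF assms(1,2)])
  also have "\<dots> = measure_pmf.expectation p
      (\<lambda>\<tau>. util N P R \<Lambda> i (w(i := a)) \<tau> - util N P R \<Lambda> i (w(i := b)) \<tau>)"
    by (simp only: pot_fun_upd_diff[where P = P, OF assms])
  also have "\<dots> = exp_util p N P R \<Lambda> i (w(i := a)) - exp_util p N P R \<Lambda> i (w(i := b))"
    unfolding exp_util_def by (intro Bochner_Integration.integral_diff integrable_util[OF assms(1-3)])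
  finally show ?thesis .
qed

lemma exact_potential_imp_ex_pure_nash:
  assumes "exact_potential I A u \<Phi>" "finite I"
    and "\<And>i. i \<in> I \<Longrightarrow> finite (A i)" "\<And>i. i \<in> I \<Longrightarrow> A i \<noteq> {}"
  shows "\<exists>w. pure_nash I A u w"
proof -
  let ?S = "Pi\<^sub>E I A"
  have "finite ?S"
    using assms(2,3) by (intro finite_PiE) auto
  moreover have "?S \<noteq> {}"
    using assms(4) by (simp add: PiE_eq_empty_iff)
  ultimately have "Max (\<Phi> ` ?S) \<in> \<Phi> ` ?S"
    by (intro Max_in) auto
  then obtain w where w_Max: "Max (\<Phi> ` ?S) = \<Phi> w" and "w \<in> ?S"
    by (rule imageE)
  have w_max: "\<Phi> w' \<le> \<Phi> w" if "w' \<in> ?S" for w'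
    unfolding w_Max[symmetric] using \<open>finite ?S\<close> that by simp
  from \<open>w \<in> ?S\<close> have w: "profile I A w"
    unfolding profile_def by auto
  have "u i (w(i := a)) \<le> u i w" if "i \<in> I" "a \<in> A i" for i a
  proof -
    have "w(i := a) \<in> ?S"
      using \<open>w \<in> ?S\<close> that by (auto simp: PiE_iff extensional_def)
    moreover have "w i \<in> A i"
      using w that(1) unfolding profile_def by blast
    with assms(1) w that have "\<Phi> (w(i := a)) - \<Phi> (w(i := w i)) = u i (w(i := a)) - u i (w(i := w i))"
      unfolding exact_potential_def by blast
    ultimately show ?thesis
      using w_max[of "w(i := a)"] by simp
  qed
  with w show ?thesis
    unfolding pure_nash_def by blast
qed

theorem theorem2:
  fixes E :: "('v \<times> 'v) set"
    and N :: nat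
    and P :: "nat \<Rightarrow> ('v \<times> 'v) list"
    and W :: "nat \<Rightarrow> nat list set"
    and R :: "nat \<Rightarrow> ('v \<times> 'v) \<Rightarrow> real"
    and \<Lambda> :: "nat \<Rightarrow> nat list \<Rightarrow> real"
    and p :: "'v realization pmf"
  assumes finE: "finite E"
    and paths_in_E: "\<And>i. i \<in> {1..N} \<Longrightarrow> set (P i) \<subseteq> E"
    and paths_connected: "\<And>i k. i \<in> {1..N} \<Longrightarrow> Suc k < length (P i) \<Longrightarrow> snd (P i ! k) = fst (P i ! Suc k)"
    and paths_simple: "\<And>i. i \<in> {1..N} \<Longrightarrow> distinct (P i)"
    and finW: "\<And>i. i \<in> {1..N} \<Longrightarrow> finite (W i)"
    and neW: "\<And>i. i \<in> {1..N} \<Longrightarrow> W i \<noteq> {}"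
    and lenW: "\<And>i wv. i \<in> {1..N} \<Longrightarrow> wv \<in> W i \<Longrightarrow> length wv = length (P i)"
  shows "exact_potential {1..N} W (exp_util p N P R \<Lambda>) (exp_pot p E N P R \<Lambda>)
         \<and> (\<exists>w. pure_nash {1..N} W (exp_util p N P R \<Lambda>) w)"
proof -
  have potential: "exact_potential {1..N} W (exp_util p N P R \<Lambda>) (exp_pot p E N P R \<Lambda>)"
    unfolding exact_potential_def
    by (intro ballI allI impI exp_pot_fun_upd_diff[where P = P] finE paths_in_E paths_simple)
  moreover have "\<exists>w. pure_nash {1..N} W (exp_util p N P R \<Lambda>) w"
    by (rule exact_potential_imp_ex_pure_nash[OF potential]) (simp_all add: finW neW)
  ultimately show ?thesis ..
qed

end
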